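(* Let $V$ be a real vector space with a non-degenerate symmetric inner product of arbitrary signature, and let $\nabla R$ be a covariant derivative algebraic curvature tensor on $V$. If $\mathcal{S}_{\nabla R}(x)=0$ for all $x\in V$, then $\nabla R=0$.
   Context: A covariant derivative algebraic curvature tensor is $\nabla R\in\otimes^5V^*$ satisfying $\nabla R(a,b,c,d;e)=-\nabla R(b,a,c,d;e)=\nabla R(c,d,a,b;e)$, $\nabla R(a,b,c,d;e)+\nabla R(a,c,d,b;e)+\nabla R(a,d,b,c;e)=0$, and $\nabla R(a,b,c,d;e)+\nabla R(a,b,d,e;c)+\nabla R(a,b,e,c;d)=0$. The Szab\'o operator is defined by $(\mathcal{S}_{\nabla R}(x)y,w)=\nabla R(y,x,x,w;x)$. *)

theory Defs
  imports "HOL-Analysis.Analysis"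
begin

definition nondeg_sym_inner :: "('v::euclidean_space \<Rightarrow> 'v \<Rightarrow> real) \<Rightarrow> bool" where
  "nondeg_sym_inner g \<longleftrightarrow> bilinear g \<and> (\<forall>x y. g x y = g y x)
     \<and> (\<forall>x. (\<forall>y. g x y = 0) \<longrightarrow> x = 0)"

definition multilinear5 :: "('v::real_vector \<Rightarrow> 'v \<Rightarrow> 'v \<Rightarrow> 'v \<Rightarrow> 'v \<Rightarrow> real) \<Rightarrow> bool" where
  "multilinear5 T \<longleftrightarrow>
     (\<forall>b c d e. linear (\<lambda>a. T a b c d e)) \<and>
     (\<forall>a c d e. linear (\<lambda>b. T a b c d e)) \<and>
     (\<forall>a b d e. linear (\<lambda>c. T a b c d e)) \<and>
     (\<forall>a b c e. linear (\<lambda>d. T a b c d e)) \<and>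
     (\<forall>a b c d. linear (\<lambda>e. T a b c d e))"

text \<open>Covariant derivative algebraic curvature tensor; T a b c d e stands for
the paper's nabla R(a,b,c,d;e).\<close>
definition cov_deriv_alg_curv :: "('v::real_vector \<Rightarrow> 'v \<Rightarrow> 'v \<Rightarrow> 'v \<Rightarrow> 'v \<Rightarrow> real) \<Rightarrow> bool" where
  "cov_deriv_alg_curv T \<longleftrightarrow> multilinear5 T \<and>
     (\<forall>a b c d e. T a b c d e = - T b a c d e) \<and>
     (\<forall>a b c d e. T a b c d e = T c d a b e) \<and>
     (\<forall>a b c d e. T a b c d e + T a c d b e + T a d b c e = 0) \<and>
     (\<forall>a b c d e. T a b c d e + T a b d e c + T a b e c d = 0)"

definition szabo :: "('v \<Rightarrow> 'v \<Rightarrow> real) \<Rightarrow> ('v \<Rightarrow> 'v \<Rightarrow> 'v \<Rightarrow> 'v \<Rightarrow> 'v \<Rightarrow> real) \<Rightarrow> 'v \<Rightarrow> 'v \<Rightarrow> 'v" where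
  "szabo g T x y = (THE z. \<forall>w. g z w = T y x x w x)"

end

theory Submission
  imports Defs
begin

text \<open>Polarizing the vanishing cubic form \<open>x \<mapsto> \<nabla>R(y,x,x,w;x)\<close> once gives
  \<open>\<nabla>R(x,y,y,x;z) = -2 \<nabla>R(x,y,z,x;y)\<close>, while the second Bianchi identity gives
  \<open>\<nabla>R(x,y,y,x;z) = \<nabla>R(x,y,z,x;y) + \<nabla>R(y,x,z,y;x)\<close>. Together they force
  \<open>\<nabla>R(y,x,z,y;x) = -3 \<nabla>R(x,y,z,x;y)\<close>; applying this twice shows that both
  quantities vanish, so \<open>\<nabla>R(x,y,y,x;z) = 0\<close>. For fixed \<open>z\<close> the tensor
  \<open>\<nabla>R(\<cdot>,\<cdot>,\<cdot>,\<cdot>;z)\<close> is an algebraic curvature tensor, and such a tensor is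
  determined by its sectional values \<open>R(x,y,y,x)\<close>. Nondegeneracy of the inner product
  is only needed to read off \<open>\<nabla>R(y,x,x,w;x) = 0\<close> from \<open>S(x) = 0\<close>.\<close>

lemma nondegenerate_bilinear_represents:
  fixes g :: "'v::euclidean_space \<Rightarrow> 'v \<Rightarrow> real"
  assumes g: "bilinear g" and nondeg: "\<And>x. (\<forall>y. g x y = 0) \<Longrightarrow> x = 0"
    and f: "linear f"
  shows "\<exists>z. \<forall>w. g z w = f w"
proof -
  have represent: "h w = adjoint h 1 \<bullet> w" if "linear h" for h :: "'v \<Rightarrow> real" and w
    using adjoint_works[OF that, of w 1] by (simp add: inner_commute)
  define L where "L z = adjoint (g z) 1" for z
  have L: "L z \<bullet> w = g z w" for z w
    unfolding L_def using g by (intro represent[symmetric]) (simp add: bilinear_def)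
  have "linear L"
  proof (rule linearI)
    show "L (x + y) = L x + L y" for x y
      by (simp add: vector_eq_rdot[symmetric] inner_add_left L bilinear_ladd[OF g])
    show "L (r *\<^sub>R x) = r *\<^sub>R L x" for r x
      by (simp add: vector_eq_rdot[symmetric] L bilinear_lmul[OF g])
  qed
  moreover have "inj L"
    unfolding linear_injective_0[OF \<open>linear L\<close>]
    using L nondeg by (metis inner_zero_left)
  ultimately obtain z where z: "L z = adjoint f 1"
    by (metis linear_injective_imp_surjective surjD)
  have "g z w = f w" for w
    using L[of z w] represent[OF f, of w] z by simp
  then show ?thesis by blast
qed

lemma szabo_inner:
  assumes "nondeg_sym_inner g" and "linear (\<lambda>w. T y x x w x)"
  shows "g (szabo g T x y) w = T y x x w x"
proof -
  have g: "bilinear g" and nondeg: "\<And>x. (\<forall>y. g x y = 0) \<Longrightarrow> x = 0"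
    using assms(1) by (auto simp: nondeg_sym_inner_def)
  obtain z where z: "\<forall>w. g z w = T y x x w x"
    using nondegenerate_bilinear_represents[OF g nondeg assms(2)] by blast
  have "z' = z" if "\<forall>w. g z' w = T y x x w x" for z'
  proof -
    have "\<forall>w. g (z' - z) w = 0"
      using that z bilinear_lsub[OF g] by simp
    then have "z' - z = 0" by (rule nondeg)
    then show ?thesis by simp
  qed
  with z have "szabo g T x y = z"
    unfolding szabo_def by (rule the_equality)
  with z show ?thesis by simp
qed

lemma multilinear5_add:
  assumes "multilinear5 T"
  shows "T (a + a') b c d e = T a b c d e + T a' b c d e"
    and "T a (b + b') c d e = T a b c d e + T a b' c d e"
    and "T a b (c + c') d e = T a b c d e + T a b c' d e"
    and "T a b c (d + d') e = T a b c d e + T a b c d' e"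
    and "T a b c d (e + e') = T a b c d e + T a b c d e'"
  using assms unfolding multilinear5_def by (auto intro: linear_add)

lemma multilinear5_diff:
  assumes "multilinear5 T"
  shows "T (a - a') b c d e = T a b c d e - T a' b c d e"
    and "T a (b - b') c d e = T a b c d e - T a b' c d e"
    and "T a b (c - c') d e = T a b c d e - T a b c' d e"
    and "T a b c (d - d') e = T a b c d e - T a b c d' e"
    and "T a b c d (e - e') = T a b c d e - T a b c d e'"
  using assms unfolding multilinear5_def by (auto intro: linear_diff)

text \<open>Comparing the expansions at \<open>x + s\<close> and \<open>x - s\<close> isolates the part of the
  cubic form that is linear in \<open>s\<close>.\<close>

lemma szabo_form_polarized:
  assumes T: "multilinear5 T" and szabo: "\<And>y x w. T y x x w x = 0"
  shows "T y x x w s + T y x s w x + T y s x w x = 0"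
proof -
  let ?D1 = "T y x x w s + T y x s w x + T y s x w x"
  let ?D2 = "T y x s w s + T y s x w s + T y s s w x"
  have "T y (x + s) (x + s) w (x + s) = ?D1 + ?D2"
    and "T y (x - s) (x - s) w (x - s) = - ?D1 + ?D2"
    using szabo[of y x w] szabo[of y s w]
    by (simp_all add: multilinear5_add[OF T] multilinear5_diff[OF T])
  moreover have "T y (x + s) (x + s) w (x + s) = 0" and "T y (x - s) (x - s) w (x - s) = 0"
    by (rule szabo)+
  ultimately show ?thesis by linarith
qed

definition multilinear4 :: "('v::real_vector \<Rightarrow> 'v \<Rightarrow> 'v \<Rightarrow> 'v \<Rightarrow> real) \<Rightarrow> bool" where
  "multilinear4 R \<longleftrightarrow>
     (\<forall>b c d. linear (\<lambda>a. R a b c d)) \<and> (\<forall>a c d. linear (\<lambda>b. R a b c d)) \<and>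
     (\<forall>a b d. linear (\<lambda>c. R a b c d)) \<and> (\<forall>a b c. linear (\<lambda>d. R a b c d))"

lemma multilinear4_add:
  assumes "multilinear4 R"
  shows "R (a + a') b c d = R a b c d + R a' b c d"
    and "R a (b + b') c d = R a b c d + R a b' c d"
    and "R a b (c + c') d = R a b c d + R a b c' d"
    and "R a b c (d + d') = R a b c d + R a b c d'"
  using assms unfolding multilinear4_def by (auto intro: linear_add)

definition alg_curv_tensor :: "('v::real_vector \<Rightarrow> 'v \<Rightarrow> 'v \<Rightarrow> 'v \<Rightarrow> real) \<Rightarrow> bool" where
  "alg_curv_tensor R \<longleftrightarrow> multilinear4 R \<and>
     (\<forall>a b c d. R a b c d = - R b a c d) \<and>
     (\<forall>a b c d. R a b c d = R c d a b) \<and>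
     (\<forall>a b c d. R a b c d + R a c d b + R a d b c = 0)"

lemma alg_curv_tensor_eq_0:
  assumes R: "alg_curv_tensor R" and sectional: "\<And>x y. R x y y x = 0"
  shows "R = (\<lambda>a b c d. 0)"
proof -
  have "multilinear4 R"
    using R unfolding alg_curv_tensor_def by (rule conjunct1)
  note add = multilinear4_add[OF this]
  have skew: "R a b c d = - R b a c d"
    and pair: "R a b c d = R c d a b"
    and bianchi: "R a b c d + R a c d b + R a d b c = 0" for a b c d
    using R unfolding alg_curv_tensor_def by blast+
  have skew34: "R a b c d = - R a b d c" for a b c d
    using pair[of a b c d] skew[of c d a b] pair[of d c a b] by simp
  have jacobi: "R x y y w = 0" for x y w
  proof -
    have "R x y y w + R w y y x = 0"
      using sectional[of "x + w" y] unfolding add by (simp add: sectional)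
    moreover have "R w y y x = R x y y w"
      using pair[of w y y x] skew[of y x w y] skew34[of x y w y] by simp
    ultimately show ?thesis by simp
  qed
  have middle_skew: "R x y z w = - R x z y w" for x y z w
    using jacobi[of x "y + z" w] unfolding add by (simp add: jacobi)
  have "R x y z w = 0" for x y z w
  proof -
    have "R x z w y = R x y z w"
      using middle_skew[of x z w y] skew34[of x w z y] middle_skew[of x w y z] skew34[of x y w z]
      by simp
    moreover have "R x w y z = R x y z w"
      using middle_skew[of x w y z] skew34[of x y w z] by simp
    ultimately show ?thesis using bianchi[of x y z w] by simp
  qed
  then show ?thesis by (intro ext)
qed

lemma cov_deriv_alg_curv_slice:
  assumes "cov_deriv_alg_curv T"
  shows "alg_curv_tensor (\<lambda>a b c d. T a b c d e)"
  using assms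
  unfolding cov_deriv_alg_curv_def multilinear5_def alg_curv_tensor_def multilinear4_def
  by fast

lemma cov_deriv_alg_curv_sectional_eq_0:
  assumes T: "cov_deriv_alg_curv T" and szabo: "\<And>y x w. T y x x w x = 0"
  shows "T x y y x z = 0"
proof -
  have skew: "T a b c d e = - T b a c d e"
    and pair: "T a b c d e = T c d a b e"
    and bianchi2: "T a b c d e + T a b d e c + T a b e c d = 0" for a b c d e
    using T unfolding cov_deriv_alg_curv_def by blast+
  have multilinear: "multilinear5 T"
    using T unfolding cov_deriv_alg_curv_def by blast
  have skew34: "T a b c d e = - T a b d c e" for a b c d e
    using pair[of a b c d e] skew[of c d a b e] pair[of d c a b e] by simp
  have polarized: "T x y y x z = -2 * T x y z x y" for x y z
  proof -
    have "T x z y x y = T x y z x y"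
      using pair[of x z y x y] skew[of y x x z y] skew34[of x y x z y] by simp
    with szabo_form_polarized[OF multilinear szabo, of x y x z] show ?thesis
      by simp
  qed
  have second_bianchi: "T x y y x z = T x y z x y + T y x z y x" for x y z
    using bianchi2[of x y y x z] skew34[of x y x z y] skew[of x y z y x] by simp
  have swap: "T y x z y x = -3 * T x y z x y" for x y z
    using polarized[of x y z] second_bianchi[of x y z] by simp
  have "T x y z x y = 0"
    using swap[of x y z] swap[of y x z] by simp
  then show ?thesis using polarized by simp
qed

lemma cov_deriv_alg_curv_eq_0:
  assumes T: "cov_deriv_alg_curv T" and szabo: "\<And>y x w. T y x x w x = 0"
  shows "T = (\<lambda>a b c d e. 0)"
proof -
  have "(\<lambda>a b c d. T a b c d e) = (\<lambda>a b c d. 0)" for e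
    by (rule alg_curv_tensor_eq_0[OF cov_deriv_alg_curv_slice[OF T]])
      (rule cov_deriv_alg_curv_sectional_eq_0[OF T szabo])
  then show ?thesis by (simp add: fun_eq_iff)
qed

lemma szabo_eq_0D:
  assumes g: "nondeg_sym_inner g" and T: "multilinear5 T"
    and szabo_0: "szabo g T x = (\<lambda>y. 0)"
  shows "T y x x w x = 0"
proof -
  have "linear (\<lambda>w. T y x x w x)"
    using T unfolding multilinear5_def by blast
  then have "T y x x w x = g (szabo g T x y) w"
    by (rule szabo_inner[OF g, symmetric])
  also have "\<dots> = g 0 w"
    using szabo_0 by simp
  also have "\<dots> = 0"
    using g bilinear_lzero unfolding nondeg_sym_inner_def by blast
  finally show ?thesis .
qed

theorem lemma3p2:
  fixes g :: "'v::euclidean_space \<Rightarrow> 'v \<Rightarrow> real"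
    and T :: "'v \<Rightarrow> 'v \<Rightarrow> 'v \<Rightarrow> 'v \<Rightarrow> 'v \<Rightarrow> real"
  assumes "nondeg_sym_inner g"
    and "cov_deriv_alg_curv T"
    and "\<forall>x. szabo g T x = (\<lambda>y. 0)"
  shows "T = (\<lambda>a b c d e. 0)"
proof (rule cov_deriv_alg_curv_eq_0[OF assms(2)])
  have "multilinear5 T"
    using assms(2) unfolding cov_deriv_alg_curv_def by (rule conjunct1)
  then show "T y x x w x = 0" for y x w
    using szabo_eq_0D assms(1,3) by blast
qed

end
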